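(* Let $k\ge3$ and let $\Gamma=(X,E)$ be a finite set-homogeneous $k$-hypergraph. Then $\mathrm{Aut}(\Gamma)$ acts 2-transitively on $X$.
   Context: A $k$-hypergraph is a pair $(X,E)$ with $E$ a set of $k$-element subsets of $X$ (edges). It is set-homogeneous if for every $t\ge1$, whenever $U,V\subseteq X$ with $|U|=|V|=t$ carry isomorphic induced subhypergraphs there is $g\in\mathrm{Aut}(\Gamma)$ with $U^g=V$. 2-transitive means transitive on ordered pairs of distinct points. *)

theory Defs
  imports Main
begin

definition hypergraph :: "nat \<Rightarrow> 'a set \<Rightarrow> 'a set set \<Rightarrow> bool" where
  "hypergraph k X E \<longleftrightarrow> (\<forall>e\<in>E. e \<subseteq> X \<and> card e = k)"

definition induced_iso :: "'a set set \<Rightarrow> 'a set \<Rightarrow> 'a set \<Rightarrow> ('a \<Rightarrow> 'a) \<Rightarrow> bool" where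
  "induced_iso E U V f \<longleftrightarrow> bij_betw f U V \<and> (\<forall>e. e \<subseteq> U \<longrightarrow> (e \<in> E \<longleftrightarrow> f ` e \<in> E))"

definition induced_isomorphic :: "'a set set \<Rightarrow> 'a set \<Rightarrow> 'a set \<Rightarrow> bool" where
  "induced_isomorphic E U V \<longleftrightarrow> (\<exists>f. induced_iso E U V f)"

definition hg_aut :: "'a set \<Rightarrow> 'a set set \<Rightarrow> ('a \<Rightarrow> 'a) set" where
  "hg_aut X E = {g. induced_iso E X X g}"

definition set_homogeneous :: "'a set \<Rightarrow> 'a set set \<Rightarrow> bool" where
  "set_homogeneous X E \<longleftrightarrow>
     (\<forall>t\<ge>1. \<forall>U V. U \<subseteq> X \<and> V \<subseteq> X \<and> card U = t \<and> card V = t \<and> induced_isomorphic E U V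
        \<longrightarrow> (\<exists>g\<in>hg_aut X E. g ` U = V))"

definition two_transitive :: "'a set \<Rightarrow> ('a \<Rightarrow> 'a) set \<Rightarrow> bool" where
  "two_transitive X G \<longleftrightarrow>
     (\<forall>x\<in>X. \<forall>y\<in>X. \<forall>x'\<in>X. \<forall>y'\<in>X. x \<noteq> y \<and> x' \<noteq> y' \<longrightarrow> (\<exists>g\<in>G. g x = x' \<and> g y = y'))"

end

theory Submission
  imports Defs "HOL-Combinatorics.Transposition"
begin

(*
  Set-homogeneity makes Aut(X, E) transitive on t-subsets for every t < k, in particular on
  points and on unordered pairs, so it is 2-transitive as soon as every pair can be swapped;
  when |X| <= k every permutation is an automorphism. Otherwise suppose no automorphism swaps
  a and b. The orbit of (a, b) is then an invariant tournament which is vertex- and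
  arc-transitive, hence regular, and the stabiliser of a is transitive on the out- and on the
  in-neighbourhood of a; each of them therefore contains a cyclic triangle. No automorphism maps
  a cyclic triangle onto one with a source. For k > 3 both kinds of triangle are edgeless, which
  contradicts homogeneity on 3-sets; for k = 3 the edges among triples are exactly the triples
  of one kind. In that case a together with a cyclic triangle of out-neighbours and a together
  with a cyclic triangle of in-neighbours span isomorphic 4-sets, although only the first one
  has a vertex dominating the other three.
*)

lemma hg_autI:
  "bij_betw g X X \<Longrightarrow> (\<And>e. e \<subseteq> X \<Longrightarrow> g ` e \<in> E \<longleftrightarrow> e \<in> E) \<Longrightarrow> g \<in> hg_aut X E"
  unfolding hg_aut_def induced_iso_def by blast

lemma hg_aut_bij: "g \<in> hg_aut X E \<Longrightarrow> bij_betw g X X"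
  unfolding hg_aut_def induced_iso_def by blast

lemma hg_aut_edge_iff: "g \<in> hg_aut X E \<Longrightarrow> e \<subseteq> X \<Longrightarrow> g ` e \<in> E \<longleftrightarrow> e \<in> E"
  unfolding hg_aut_def induced_iso_def by blast

lemma hg_aut_in: "g \<in> hg_aut X E \<Longrightarrow> x \<in> X \<Longrightarrow> g x \<in> X"
  using hg_aut_bij bij_betwE by blast

lemma hg_aut_surj: "g \<in> hg_aut X E \<Longrightarrow> w \<in> X \<Longrightarrow> \<exists>u\<in>X. w = g u"
  using hg_aut_bij[of g X E] by (auto simp: bij_betw_def)

lemma hg_aut_image_subset: "g \<in> hg_aut X E \<Longrightarrow> e \<subseteq> X \<Longrightarrow> g ` e \<subseteq> X"
  using hg_aut_in[of g X E] by blast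

lemma hg_aut_comp:
  assumes g: "g \<in> hg_aut X E" and h: "h \<in> hg_aut X E"
  shows "g \<circ> h \<in> hg_aut X E"
proof -
  have "bij_betw (g \<circ> h) X X"
    using hg_aut_bij[OF g] hg_aut_bij[OF h] bij_betw_trans by blast
  moreover have "(g \<circ> h) ` e \<in> E \<longleftrightarrow> e \<in> E" if e: "e \<subseteq> X" for e
    using hg_aut_edge_iff[OF g hg_aut_image_subset[OF h e]] hg_aut_edge_iff[OF h e]
    by (simp add: image_comp)
  ultimately show ?thesis by (rule hg_autI)
qed

lemma hg_aut_inv_into:
  assumes g: "g \<in> hg_aut X E"
  shows "inv_into X g \<in> hg_aut X E"
proof -
  have bij: "bij_betw (inv_into X g) X X" using bij_betw_inv_into[OF hg_aut_bij[OF g]] .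
  have "inv_into X g ` e \<in> E \<longleftrightarrow> e \<in> E" if e: "e \<subseteq> X" for e
  proof -
    have sub: "inv_into X g ` e \<subseteq> X" using e bij bij_betw_imp_surj_on by blast
    have "g ` inv_into X g ` e = e"
      using e hg_aut_bij[OF g] by (simp add: bij_betw_def image_inv_into_cancel)
    then show ?thesis using hg_aut_edge_iff[OF g sub] by simp
  qed
  with bij show ?thesis by (rule hg_autI)
qed

lemma hg_aut_inv_into_cancel: "g \<in> hg_aut X E \<Longrightarrow> x \<in> X \<Longrightarrow> inv_into X g (g x) = x"
  using hg_aut_bij bij_betw_inv_into_left by fastforce

lemma hg_aut_if_card_le:
  assumes "finite X" "hypergraph k X E" "card X \<le> k" and g: "bij_betw g X X"
  shows "g \<in> hg_aut X E"
proof -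
  have onto: "g ` X = X" and inj: "inj_on g X" using g by (simp_all add: bij_betw_def)
  have edge_eq_X: "e = X" if "e \<subseteq> X" "e \<in> E" for e
  proof (rule card_seteq[OF assms(1) that(1)])
    show "card X \<le> card e" using assms(2,3) that(2) unfolding hypergraph_def by simp
  qed
  have "g ` e \<in> E \<longleftrightarrow> e \<in> E" if e: "e \<subseteq> X" for e
  proof
    assume "g ` e \<in> E"
    have "g ` e \<subseteq> X" using e onto by blast
    then have "g ` e = X" using \<open>g ` e \<in> E\<close> by (rule edge_eq_X)
    then have "e = X" using inj_on_image_eq_iff[OF inj e subset_refl] onto by simp
    with \<open>g ` e \<in> E\<close> \<open>g ` e = X\<close> show "e \<in> E" by simp
  next
    assume "e \<in> E"
    with e have "e = X" by (rule edge_eq_X)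
    with \<open>e \<in> E\<close> onto show "g ` e \<in> E" by simp
  qed
  with g show ?thesis by (rule hg_autI)
qed

lemma induced_isomorphic_if_card_le:
  assumes "hypergraph k X E" "finite A" "finite B" "card A = card B" "card A \<le> k" "A \<in> E \<longleftrightarrow> B \<in> E"
  shows "induced_isomorphic E A B"
proof -
  obtain f where f: "bij_betw f A B" using finite_same_card_bij assms(2-4) by blast
  have "e \<in> E \<longleftrightarrow> f ` e \<in> E" if e: "e \<subseteq> A" for e
  proof (cases "e = A")
    case True
    then show ?thesis using f assms(6) by (simp add: bij_betw_def)
  next
    case False
    then have "card e < k" using e assms(2,5) by (meson psubsetI psubset_card_mono order_less_le_trans)
    moreover have "card (f ` e) \<le> card e" using card_image_le assms(2) e finite_subset by blast
    ultimately show ?thesis using assms(1) unfolding hypergraph_def by auto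
  qed
  with f show ?thesis unfolding induced_isomorphic_def induced_iso_def by blast
qed

lemma set_homogeneousD:
  assumes "set_homogeneous X E" "A \<subseteq> X" "B \<subseteq> X" "card A = card B" "1 \<le> card A"
    and "induced_isomorphic E A B"
  shows "\<exists>g\<in>hg_aut X E. g ` A = B"
proof -
  have "A \<subseteq> X \<and> B \<subseteq> X \<and> card A = card A \<and> card B = card A \<and> induced_isomorphic E A B"
    using assms(2-6) by simp
  with assms(1,5) show ?thesis unfolding set_homogeneous_def by blast
qed

lemma set_homogeneous_ex_aut_onto_small:
  assumes "hypergraph k X E" "set_homogeneous X E" "finite X" "A \<subseteq> X" "B \<subseteq> X"
    and "card A = card B" "1 \<le> card A" "card A < k"
  shows "\<exists>g\<in>hg_aut X E. g ` A = B"
proof -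
  have "A \<notin> E" "B \<notin> E" using assms(1,6,8) unfolding hypergraph_def by auto
  moreover have "finite A" "finite B" using assms(3-5) finite_subset by auto
  ultimately have "induced_isomorphic E A B"
    using induced_isomorphic_if_card_le[OF assms(1)] assms(6,8) by simp
  then show ?thesis using set_homogeneousD[OF assms(2,4-7)] by blast
qed

lemma two_transitive_if_swaps:
  assumes "hypergraph k X E" "set_homogeneous X E" "finite X" "3 \<le> k"
    and swap: "\<And>x y. x \<in> X \<Longrightarrow> y \<in> X \<Longrightarrow> x \<noteq> y \<Longrightarrow> \<exists>g\<in>hg_aut X E. g x = y \<and> g y = x"
  shows "two_transitive X (hg_aut X E)"
  unfolding two_transitive_def
proof (intro ballI impI)
  fix x y x' y' assume in_X: "x \<in> X" "y \<in> X" "x' \<in> X" "y' \<in> X" and neq: "x \<noteq> y \<and> x' \<noteq> y'"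
  have "card {x, y} = card {x', y'}" "1 \<le> card {x, y}" "card {x, y} < k"
    using neq assms(4) by auto
  then obtain g where g: "g \<in> hg_aut X E" "g ` {x, y} = {x', y'}"
    using set_homogeneous_ex_aut_onto_small[OF assms(1-3), of "{x, y}" "{x', y'}"] in_X by blast
  then have "g x = x' \<and> g y = y' \<or> g x = y' \<and> g y = x'"
    by (simp add: doubleton_eq_iff)
  then consider "g x = x'" "g y = y'" | "g x = y'" "g y = x'" by blast
  then show "\<exists>g\<in>hg_aut X E. g x = x' \<and> g y = y'"
  proof cases
    case 1
    with g(1) show ?thesis by blast
  next
    case 2
    obtain s where s: "s \<in> hg_aut X E" "s y' = x'" "s x' = y'"
      using swap[of x' y'] in_X neq by blast
    have "(s \<circ> g) x = x' \<and> (s \<circ> g) y = y'" using 2 s by simp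
    with hg_aut_comp[OF s(1) g(1)] show ?thesis by blast
  qed
qed

text \<open>Without a 3-cycle the out-neighbourhood of y is a proper subset of that of x whenever R x y,
  while an automorphism taking x to y maps the former injectively into the latter.\<close>

lemma vertex_transitive_tournament_has_3_cycle:
  fixes R :: "'a \<Rightarrow> 'a \<Rightarrow> bool"
  assumes "finite S" "x0 \<in> S" "y0 \<in> S" "x0 \<noteq> y0"
    and total: "\<And>x y. x \<in> S \<Longrightarrow> y \<in> S \<Longrightarrow> x \<noteq> y \<Longrightarrow> R x y \<or> R y x"
    and asym: "\<And>x y. x \<in> S \<Longrightarrow> y \<in> S \<Longrightarrow> R x y \<Longrightarrow> \<not> R y x"
    and transitive: "\<And>x y. x \<in> S \<Longrightarrow> y \<in> S \<Longrightarrow> \<exists>g. g x = y \<and> inj_on g S \<and> g ` S \<subseteq> S \<and>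
                 (\<forall>u\<in>S. \<forall>w\<in>S. R u w \<longrightarrow> R (g u) (g w))"
  shows "\<exists>p\<in>S. \<exists>q\<in>S. \<exists>r\<in>S. R p q \<and> R q r \<and> R r p"
proof (rule ccontr)
  assume no_cycle: "\<not> ?thesis"
  obtain x y where x: "x \<in> S" and y: "y \<in> S" and xy: "R x y"
    using assms(2-4) total by blast
  define Out where "Out z = {w\<in>S. R z w}" for z
  have "Out y \<subseteq> Out x"
  proof
    fix w assume "w \<in> Out y"
    then have w: "w \<in> S" "R y w" by (auto simp: Out_def)
    then have "w \<noteq> x" using asym x y xy by blast
    then have "R x w" using no_cycle total w x y xy by blast
    with w show "w \<in> Out x" by (simp add: Out_def)
  qed
  moreover have "y \<in> Out x" "y \<notin> Out y" using y xy asym by (auto simp: Out_def)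
  ultimately have "card (Out y) < card (Out x)"
    using assms(1) by (intro psubset_card_mono) (auto simp: Out_def)
  moreover obtain g where g: "g x = y" "inj_on g S" "g ` S \<subseteq> S"
    "\<forall>u\<in>S. \<forall>w\<in>S. R u w \<longrightarrow> R (g u) (g w)" using transitive x y by blast
  then have "card (Out x) \<le> card (Out y)"
    using assms(1) x
    by (intro card_inj_on_le[of g]) (auto simp: Out_def intro: inj_on_subset)
  ultimately show False by simp
qed

locale nonswappable_pair =
  fixes X :: "'a set" and E :: "'a set set" and k :: nat and a b :: 'a
  assumes finite_X: "finite X" and hypergraph: "hypergraph k X E"
    and homogeneous: "set_homogeneous X E" and k_ge_3: "3 \<le> k" and k_less_card: "k < card X"
    and a_in_X: "a \<in> X" and b_in_X: "b \<in> X" and a_neq_b: "a \<noteq> b"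
    and no_swap: "\<not> (\<exists>g\<in>hg_aut X E. g a = b \<and> g b = a)"
begin

definition arc :: "'a \<Rightarrow> 'a \<Rightarrow> bool" where
  "arc x y \<longleftrightarrow> (\<exists>g\<in>hg_aut X E. g a = x \<and> g b = y)"

lemma ex_aut_onto_small:
  "A \<subseteq> X \<Longrightarrow> B \<subseteq> X \<Longrightarrow> card A = card B \<Longrightarrow> 1 \<le> card A \<Longrightarrow> card A < k
    \<Longrightarrow> \<exists>g\<in>hg_aut X E. g ` A = B"
  by (rule set_homogeneous_ex_aut_onto_small[OF hypergraph homogeneous finite_X])

lemma ex_aut_map:
  assumes "x \<in> X" "y \<in> X"
  shows "\<exists>g\<in>hg_aut X E. g x = y"
proof -
  have "card {x} = card {y}" "1 \<le> card {x}" "card {x} < k" using k_ge_3 by simp_all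
  then obtain g where "g \<in> hg_aut X E" "g ` {x} = {y}"
    using ex_aut_onto_small[of "{x}" "{y}"] assms by blast
  then show ?thesis by auto
qed

lemma arcD:
  assumes "arc x y"
  shows "x \<in> X" "y \<in> X" "x \<noteq> y"
proof -
  obtain g where g: "g \<in> hg_aut X E" "g a = x" "g b = y" using assms unfolding arc_def by blast
  show "x \<in> X" "y \<in> X" using g hg_aut_in[OF g(1)] a_in_X b_in_X by auto
  have "inj_on g X" using hg_aut_bij[OF g(1)] by (simp add: bij_betw_def)
  then show "x \<noteq> y" using g a_neq_b a_in_X b_in_X by (metis inj_onD)
qed

lemma arc_total:
  assumes "x \<in> X" "y \<in> X" "x \<noteq> y"
  shows "arc x y \<or> arc y x"
proof -
  have "card {a, b} = card {x, y}" "1 \<le> card {a, b}" "card {a, b} < k"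
    using assms(3) a_neq_b k_ge_3 by simp_all
  then obtain g where g: "g \<in> hg_aut X E" "g ` {a, b} = {x, y}"
    using ex_aut_onto_small[of "{a, b}" "{x, y}"] assms a_in_X b_in_X by blast
  then have "g a = x \<and> g b = y \<or> g a = y \<and> g b = x" by (simp add: doubleton_eq_iff)
  with g(1) show ?thesis unfolding arc_def by blast
qed

lemma arc_asym:
  assumes "arc x y"
  shows "\<not> arc y x"
proof
  assume "arc y x"
  with assms obtain g h where g: "g \<in> hg_aut X E" "g a = x" "g b = y"
    and h: "h \<in> hg_aut X E" "h a = y" "h b = x" unfolding arc_def by blast
  have "(inv_into X g \<circ> h) a = b \<and> (inv_into X g \<circ> h) b = a"
    using g h hg_aut_inv_into_cancel[OF g(1)] a_in_X b_in_X by auto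
  with hg_aut_comp[OF hg_aut_inv_into[OF g(1)] h(1)] no_swap show False by blast
qed

lemma arc_aut:
  assumes g: "g \<in> hg_aut X E" and "arc x y"
  shows "arc (g x) (g y)"
proof -
  obtain h where h: "h \<in> hg_aut X E" "h a = x" "h b = y" using assms(2) unfolding arc_def by blast
  have "(g \<circ> h) a = g x \<and> (g \<circ> h) b = g y" using h by simp
  with hg_aut_comp[OF g h(1)] show ?thesis unfolding arc_def by blast
qed

lemma arc_aut_iff:
  assumes g: "g \<in> hg_aut X E" and "x \<in> X" "y \<in> X"
  shows "arc (g x) (g y) \<longleftrightarrow> arc x y"
proof
  assume "arc (g x) (g y)"
  from arc_aut[OF hg_aut_inv_into[OF g] this] show "arc x y"
    using hg_aut_inv_into_cancel[OF g] assms(2,3) by simp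
qed (rule arc_aut[OF g])

lemma arc_transitive:
  assumes "arc x y" "arc x' y'"
  shows "\<exists>g\<in>hg_aut X E. g x = x' \<and> g y = y'"
proof -
  obtain g h where g: "g \<in> hg_aut X E" "g a = x" "g b = y"
    and h: "h \<in> hg_aut X E" "h a = x'" "h b = y'" using assms unfolding arc_def by blast
  have "(h \<circ> inv_into X g) x = x' \<and> (h \<circ> inv_into X g) y = y'"
    using g h hg_aut_inv_into_cancel[OF g(1)] a_in_X b_in_X by auto
  with hg_aut_comp[OF h(1) hg_aut_inv_into[OF g(1)]] show ?thesis by blast
qed

definition Out :: "'a \<Rightarrow> 'a set" where
  "Out v = {w \<in> X. arc v w}"

definition In :: "'a \<Rightarrow> 'a set" where
  "In v = {w \<in> X. arc w v}"

lemma finite_Out: "finite (Out v)" and finite_In: "finite (In v)"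
  using finite_X by (simp_all add: Out_def In_def)

lemma image_Out_aut:
  assumes g: "g \<in> hg_aut X E" and "v \<in> X"
  shows "g ` Out v = Out (g v)"
proof
  show "g ` Out v \<subseteq> Out (g v)" using arc_aut[OF g] hg_aut_in[OF g] by (auto simp: Out_def)
  show "Out (g v) \<subseteq> g ` Out v"
  proof
    fix w assume "w \<in> Out (g v)"
    then have "w \<in> X" "arc (g v) w" by (simp_all add: Out_def)
    then obtain u where u: "u \<in> X" "w = g u" using hg_aut_surj[OF g] by blast
    with \<open>arc (g v) w\<close> have "arc v u" using arc_aut_iff[OF g \<open>v \<in> X\<close>] by simp
    with u show "w \<in> g ` Out v" by (auto simp: Out_def)
  qed
qed

lemma image_In_aut:
  assumes g: "g \<in> hg_aut X E" and "v \<in> X"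
  shows "g ` In v = In (g v)"
proof
  show "g ` In v \<subseteq> In (g v)" using arc_aut[OF g] hg_aut_in[OF g] by (auto simp: In_def)
  show "In (g v) \<subseteq> g ` In v"
  proof
    fix w assume "w \<in> In (g v)"
    then have "w \<in> X" "arc w (g v)" by (simp_all add: In_def)
    then obtain u where u: "u \<in> X" "w = g u" using hg_aut_surj[OF g] by blast
    with \<open>arc w (g v)\<close> have "arc u v" using arc_aut_iff[OF g _ \<open>v \<in> X\<close>] by simp
    with u show "w \<in> g ` In v" by (auto simp: In_def)
  qed
qed

lemma card_Out_In_eq:
  assumes "v \<in> X"
  shows "card (Out v) = card (Out a)" "card (In v) = card (In a)"
proof -
  obtain g where g: "g \<in> hg_aut X E" "g a = v" using ex_aut_map[OF a_in_X assms] by blast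
  have inj: "inj_on g X" using hg_aut_bij[OF g(1)] by (simp add: bij_betw_def)
  have "card (g ` Out a) = card (Out a)" "card (g ` In a) = card (In a)"
    using inj by (auto simp: Out_def In_def intro!: card_image inj_on_subset[OF inj])
  then show "card (Out v) = card (Out a)" "card (In v) = card (In a)"
    using image_Out_aut[OF g(1) a_in_X] image_In_aut[OF g(1) a_in_X] g(2) by simp_all
qed

lemma card_Out_eq_card_In: "card (Out a) = card (In a)"
proof -
  have "card X * card (Out a) = (\<Sum>v\<in>X. card (Out v))" using card_Out_In_eq(1) by simp
  also have "\<dots> = (\<Sum>v\<in>X. \<Sum>w\<in>X. if arc v w then 1 else 0)"
    unfolding Out_def card_eq_sum by (intro sum.cong refl sum.inter_filter[OF finite_X])
  also have "\<dots> = (\<Sum>w\<in>X. \<Sum>v\<in>X. if arc v w then 1 else 0)" by (rule sum.swap)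
  also have "\<dots> = (\<Sum>w\<in>X. card (In w))"
    unfolding In_def card_eq_sum by (intro sum.cong refl sum.inter_filter[OF finite_X, symmetric])
  also have "\<dots> = card X * card (In a)" using card_Out_In_eq(2) by simp
  finally show ?thesis using k_less_card by simp
qed

lemma card_Out_plus_card_In: "card (Out a) + card (In a) = card X - 1"
proof -
  have "Out a \<union> In a = X - {a}"
    using arc_total[OF a_in_X] by (auto simp: Out_def In_def dest: arcD)
  moreover have "Out a \<inter> In a = {}" using arc_asym by (auto simp: Out_def In_def)
  ultimately show ?thesis
    using card_Un_disjoint[OF finite_Out finite_In, of a a] card_Diff_singleton[OF a_in_X] by simp
qed

lemma two_le_card_Out_In:
  assumes "v \<in> X"
  shows "2 \<le> card (Out v)" "2 \<le> card (In v)"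
  using card_Out_In_eq[OF assms] card_Out_eq_card_In card_Out_plus_card_In k_ge_3 k_less_card
  by simp_all

lemma Out_stable:
  assumes "v \<in> X" "x \<in> Out v" "y \<in> Out v"
  shows "\<exists>g\<in>hg_aut X E. g x = y \<and> g ` Out v = Out v"
proof -
  obtain g where g: "g \<in> hg_aut X E" "g v = v" "g x = y"
    using arc_transitive[of v x v y] assms(2,3) by (auto simp: Out_def)
  with image_Out_aut[OF g(1) assms(1)] show ?thesis by auto
qed

lemma In_stable:
  assumes "v \<in> X" "x \<in> In v" "y \<in> In v"
  shows "\<exists>g\<in>hg_aut X E. g x = y \<and> g ` In v = In v"
proof -
  obtain g where g: "g \<in> hg_aut X E" "g x = y" "g v = v"
    using arc_transitive[of x v y v] assms(2,3) by (auto simp: In_def)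
  with image_In_aut[OF g(1) assms(1)] show ?thesis by auto
qed

definition has_source :: "'a set \<Rightarrow> bool" where
  "has_source T \<longleftrightarrow> (\<exists>x\<in>T. \<forall>y\<in>T. y \<noteq> x \<longrightarrow> arc x y)"

lemma has_source_aut_image:
  assumes g: "g \<in> hg_aut X E" and "T \<subseteq> X" "has_source T"
  shows "has_source (g ` T)"
proof -
  obtain x where x: "x \<in> T" "\<And>y. y \<in> T \<Longrightarrow> y \<noteq> x \<Longrightarrow> arc x y"
    using assms(3) unfolding has_source_def by blast
  have "arc (g x) (g y)" if "y \<in> T" "g y \<noteq> g x" for y
    using arc_aut[OF g x(2)[OF that(1)]] that by blast
  with x(1) show ?thesis unfolding has_source_def by blast
qed

lemma has_source_aut_image_iff:
  assumes g: "g \<in> hg_aut X E" and T: "T \<subseteq> X"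
  shows "has_source (g ` T) \<longleftrightarrow> has_source T"
proof
  assume "has_source (g ` T)"
  moreover have "inv_into X g ` g ` T = T"
    using hg_aut_bij[OF g] T by (simp add: bij_betw_def)
  ultimately show "has_source T"
    using has_source_aut_image[OF hg_aut_inv_into[OF g] hg_aut_image_subset[OF g T]] by simp
qed (rule has_source_aut_image[OF g T])

lemma not_has_source_3_cycle:
  assumes cycle: "arc p q" "arc q r" "arc r p"
  shows "\<not> has_source {p, q, r}"
proof
  assume "has_source {p, q, r}"
  then obtain x where x: "x \<in> {p, q, r}" and src: "\<forall>y\<in>{p, q, r}. y \<noteq> x \<longrightarrow> arc x y"
    unfolding has_source_def by blast
  have distinct: "p \<noteq> q" "q \<noteq> r" "r \<noteq> p"
    using arcD(3)[OF cycle(1)] arcD(3)[OF cycle(2)] arcD(3)[OF cycle(3)] by simp_all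
  have "\<not> arc p r" "\<not> arc q p" "\<not> arc r q"
    using arc_asym[OF cycle(3)] arc_asym[OF cycle(1)] arc_asym[OF cycle(2)] .
  moreover have "arc p r" if "x = p" using src that distinct(3) by auto
  moreover have "arc q p" if "x = q" using src that distinct(1) by auto
  moreover have "arc r q" if "x = r" using src that distinct(2) by auto
  ultimately show False using x by blast
qed

lemma sourceless_triple:
  assumes S: "S \<subseteq> X" "2 \<le> card S"
    and stable: "\<And>x y. x \<in> S \<Longrightarrow> y \<in> S \<Longrightarrow> \<exists>g\<in>hg_aut X E. g x = y \<and> g ` S = S"
  shows "\<exists>T\<subseteq>S. card T = 3 \<and> \<not> has_source T"
proof -
  have fin: "finite S" using S(1) finite_X finite_subset by blast
  have "\<not> card S \<le> Suc 0" using S(2) by simp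
  then obtain x0 y0 where x0y0: "x0 \<in> S" "y0 \<in> S" "x0 \<noteq> y0"
    using card_le_Suc0_iff_eq[OF fin] by blast
  have total: "arc x y \<or> arc y x" if "x \<in> S" "y \<in> S" "x \<noteq> y" for x y
    using arc_total[of x y] that S(1) by blast
  have asym: "\<not> arc y x" if "x \<in> S" "y \<in> S" "arc x y" for x y
    using arc_asym[OF that(3)] .
  have transitive: "\<exists>g. g x = y \<and> inj_on g S \<and> g ` S \<subseteq> S \<and>
      (\<forall>u\<in>S. \<forall>w\<in>S. arc u w \<longrightarrow> arc (g u) (g w))" if xy: "x \<in> S" "y \<in> S" for x y
  proof -
    obtain g where g: "g \<in> hg_aut X E" "g x = y" "g ` S = S" using stable[OF xy] by blast
    have "inj_on g S" using hg_aut_bij[OF g(1)] S(1) by (auto simp: bij_betw_def intro: inj_on_subset)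
    with g(2,3) show ?thesis by (intro exI[of _ g]) (auto intro: arc_aut[OF g(1)])
  qed
  obtain p q r where pqr: "p \<in> S" "q \<in> S" "r \<in> S" and cycle: "arc p q" "arc q r" "arc r p"
    using vertex_transitive_tournament_has_3_cycle[OF fin x0y0 total asym transitive] by blast
  then have "card {p, q, r} = 3"
    using arcD(3)[OF cycle(1)] arcD(3)[OF cycle(2)] arcD(3)[OF cycle(3)] by simp
  moreover have "{p, q, r} \<subseteq> S" using pqr by simp
  ultimately show ?thesis using not_has_source_3_cycle[OF cycle] by blast
qed

lemma sourceless_triple_Out:
  assumes "v \<in> X"
  shows "\<exists>T\<subseteq>Out v. card T = 3 \<and> \<not> has_source T"
  by (rule sourceless_triple) (use Out_stable[OF assms] two_le_card_Out_In[OF assms] in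
      \<open>auto simp: Out_def\<close>)

lemma sourceless_triple_In:
  assumes "v \<in> X"
  shows "\<exists>T\<subseteq>In v. card T = 3 \<and> \<not> has_source T"
  by (rule sourceless_triple) (use In_stable[OF assms] two_le_card_Out_In[OF assms] in
      \<open>auto simp: In_def\<close>)

lemma edge_status_differs:
  assumes S: "S \<subseteq> X" "card S = 3" "has_source S" and T: "T \<subseteq> X" "card T = 3" "\<not> has_source T"
  shows "k = 3" "S \<in> E \<longleftrightarrow> T \<notin> E"
proof -
  have no_aut: "\<not> (\<exists>g\<in>hg_aut X E. g ` S = T)"
    using has_source_aut_image_iff S T by blast
  show k: "k = 3"
  proof (rule ccontr)
    assume "k \<noteq> 3"
    then have "card S < k" using S(2) k_ge_3 by simp
    then show False using ex_aut_onto_small[OF S(1) T(1)] S(2) T(2) no_aut by simp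
  qed
  show "S \<in> E \<longleftrightarrow> T \<notin> E"
  proof (rule ccontr)
    assume "\<not> (S \<in> E \<longleftrightarrow> T \<notin> E)"
    then have "induced_isomorphic E S T"
      using induced_isomorphic_if_card_le[OF hypergraph] S T k finite_X finite_subset by (metis order_refl)
    then show False using set_homogeneousD[OF homogeneous S(1) T(1)] S(2) T(2) no_aut by simp
  qed
qed

lemma edge_iff_has_source:
  assumes S: "S \<subseteq> X" "card S = 3" "has_source S" and S': "S' \<subseteq> X" "card S' = 3" "\<not> has_source S'"
    and T: "T \<subseteq> X" "card T = 3"
  shows "T \<in> E \<longleftrightarrow> (has_source T \<longleftrightarrow> S \<in> E)"
proof (cases "has_source T")
  case True
  then show ?thesis using edge_status_differs[OF T True S'] edge_status_differs[OF S S'] by blast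
next
  case False
  then show ?thesis using edge_status_differs[OF S T False] by blast
qed

lemma has_source_insert_Out: "T \<subseteq> Out v \<Longrightarrow> has_source (insert v T)"
  unfolding has_source_def Out_def by blast

lemma not_has_source_insert_In:
  assumes "T \<subseteq> In v" "T \<noteq> {}" "\<not> has_source T"
  shows "\<not> has_source (insert v T)"
proof
  assume "has_source (insert v T)"
  then obtain x where x: "x \<in> insert v T" "\<And>y. y \<in> insert v T \<Longrightarrow> y \<noteq> x \<Longrightarrow> arc x y"
    unfolding has_source_def by blast
  show False
  proof (cases "x = v")
    case True
    obtain y where "y \<in> T" using assms(2) by blast
    with assms(1) have "arc y v" "y \<noteq> v" by (auto simp: In_def dest: arcD)
    with x(2)[of y] True \<open>y \<in> T\<close> show False using arc_asym by blast
  next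
    case False
    with x have "x \<in> T" "\<forall>y\<in>T. y \<noteq> x \<longrightarrow> arc x y" by auto
    with assms(3) show False unfolding has_source_def by blast
  qed
qed

lemma has_source_triple_insert_Out:
  assumes T: "T \<subseteq> Out v" "card T = 3" "\<not> has_source T" and e: "e \<subseteq> insert v T" "card e = 3"
  shows "has_source e \<longleftrightarrow> v \<in> e"
proof
  assume "has_source e"
  show "v \<in> e"
  proof (rule ccontr)
    assume "v \<notin> e"
    then have "e = T" using e T(2) card_subset_eq[of T e] by (metis card.infinite subset_insert zero_neq_numeral)
    with T(3) \<open>has_source e\<close> show False by simp
  qed
next
  assume "v \<in> e"
  have "e - {v} \<subseteq> Out v" using e(1) T(1) by blast
  with \<open>v \<in> e\<close> show "has_source e" unfolding has_source_def Out_def by blast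
qed

lemma has_source_triple_insert_In:
  assumes T: "T \<subseteq> In v" "card T = 3" "\<not> has_source T" and e: "e \<subseteq> insert v T" "card e = 3"
  shows "has_source e \<longleftrightarrow> v \<in> e"
proof
  assume "has_source e"
  show "v \<in> e"
  proof (rule ccontr)
    assume "v \<notin> e"
    then have "e = T" using e T(2) card_subset_eq[of T e] by (metis card.infinite subset_insert zero_neq_numeral)
    with T(3) \<open>has_source e\<close> show False by simp
  qed
next
  assume "v \<in> e"
  then have "card (e - {v}) = 2" using e(2) by simp
  then obtain y z where yz: "e - {v} = {y, z}" "y \<noteq> z" by (auto simp: card_2_iff)
  then have "arc y v" "arc z v" using e(1) T(1) by (auto simp: In_def)
  moreover have "arc y z \<or> arc z y" using arc_total arcD \<open>arc y v\<close> \<open>arc z v\<close> yz(2) by blast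
  ultimately have "has_source {v, y, z}" unfolding has_source_def by blast
  moreover have "e = {v, y, z}" using yz \<open>v \<in> e\<close> by blast
  ultimately show "has_source e" by simp
qed

lemma induced_isomorphic_insert_Out_In:
  assumes v: "v \<in> X"
    and T1: "T1 \<subseteq> Out v" "card T1 = 3" "\<not> has_source T1"
    and T2: "T2 \<subseteq> In v" "card T2 = 3" "\<not> has_source T2"
  shows "induced_isomorphic E (insert v T1) (insert v T2)"
proof -
  have sub: "T1 \<subseteq> X" "T2 \<subseteq> X" using T1(1) T2(1) by (auto simp: Out_def In_def)
  have fin: "finite T1" "finite T2" using T1(2) T2(2) by (simp_all add: card_ge_0_finite)
  have v_notin: "v \<notin> T1" "v \<notin> T2" using T1(1) T2(1) arcD(3)[of v v] by (auto simp: Out_def In_def)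
  have "T1 \<noteq> {}" using T1(2) by (metis card.empty zero_neq_numeral)
  then obtain r where "r \<in> T1" by blast
  define S where "S = insert v T1 - {r}"
  have S: "S \<subseteq> X" "card S = 3" "has_source S"
  proof -
    show "S \<subseteq> X" using v sub(1) by (auto simp: S_def)
    show "card S = 3" using fin(1) v_notin(1) T1(2) \<open>r \<in> T1\<close> by (simp add: S_def)
    then show "has_source S"
      using has_source_triple_insert_Out[OF T1, of S] \<open>r \<in> T1\<close> v_notin(1) by (auto simp: S_def)
  qed
  have k: "k = 3" using edge_status_differs(1)[OF S sub(1) T1(2,3)] .
  obtain f where f: "bij_betw f T1 T2" using finite_same_card_bij[OF fin] T1(2) T2(2) by auto
  define F where "F = f(v := v)"
  have Fv: "F v = v" by (simp add: F_def)
  have "bij_betw F T1 T2 \<longleftrightarrow> bij_betw f T1 T2"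
    by (rule bij_betw_cong) (use v_notin(1) in \<open>auto simp: F_def\<close>)
  with f have "bij_betw F ({v} \<union> T1) ({v} \<union> T2)"
    using v_notin(2) Fv by (intro bij_betw_combine) (simp_all add: bij_betw_def)
  then have F: "bij_betw F (insert v T1) (insert v T2)" by simp
  have "F ` e \<in> E \<longleftrightarrow> e \<in> E" if e: "e \<subseteq> insert v T1" for e
  proof -
    have inj: "inj_on F (insert v T1)" using F by (rule bij_betw_imp_inj_on)
    have "F ` insert v T1 = insert v T2" using F by (rule bij_betw_imp_surj_on)
    then have Fe: "F ` e \<subseteq> insert v T2" "card (F ` e) = card e"
      using image_mono[OF e, of F] card_image[OF inj_on_subset[OF inj e]] by simp_all
    show ?thesis
    proof (cases "card e = 3")
      case True
      have "e \<subseteq> X" "F ` e \<subseteq> X" using e Fe(1) v sub by auto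
      have "e \<in> E \<longleftrightarrow> (v \<in> e \<longleftrightarrow> S \<in> E)"
        using edge_iff_has_source[OF S sub(1) T1(2,3) \<open>e \<subseteq> X\<close> True]
          has_source_triple_insert_Out[OF T1 e True] by simp
      moreover have "F ` e \<in> E \<longleftrightarrow> (v \<in> F ` e \<longleftrightarrow> S \<in> E)"
        using edge_iff_has_source[OF S sub(1) T1(2,3) \<open>F ` e \<subseteq> X\<close>] True Fe(2)
          has_source_triple_insert_In[OF T2 Fe(1)] by simp
      moreover have "v \<in> F ` e \<longleftrightarrow> v \<in> e"
        using inj_on_image_mem_iff[OF inj insertI1 e] Fv by simp
      ultimately show ?thesis by simp
    next
      case False
      with Fe(2) k show ?thesis using hypergraph unfolding hypergraph_def by auto
    qed
  qed
  with F show ?thesis unfolding induced_isomorphic_def induced_iso_def by blast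
qed

lemma contradiction: False
proof -
  obtain T1 where T1: "T1 \<subseteq> Out a" "card T1 = 3" "\<not> has_source T1"
    using sourceless_triple_Out[OF a_in_X] by blast
  obtain T2 where T2: "T2 \<subseteq> In a" "card T2 = 3" "\<not> has_source T2"
    using sourceless_triple_In[OF a_in_X] by blast
  have "a \<notin> T1" "a \<notin> T2" "finite T1" "finite T2"
    using T1 T2 by (auto simp: Out_def In_def dest: arcD intro: card_ge_0_finite)
  then have "card (insert a T1) = card (insert a T2)" "1 \<le> card (insert a T1)"
    using T1(2) T2(2) by simp_all
  moreover have "insert a T1 \<subseteq> X" "insert a T2 \<subseteq> X"
    using a_in_X T1(1) T2(1) by (auto simp: Out_def In_def)
  ultimately obtain g where g: "g \<in> hg_aut X E" "g ` insert a T1 = insert a T2"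
    using set_homogeneousD[OF homogeneous] induced_isomorphic_insert_Out_In[OF a_in_X T1 T2]
    by blast
  have "has_source (insert a T2)"
    using has_source_aut_image[OF g(1) \<open>insert a T1 \<subseteq> X\<close> has_source_insert_Out[OF T1(1)]] g(2)
    by simp
  moreover have "T2 \<noteq> {}" using T2(2) by (metis card.empty zero_neq_numeral)
  ultimately show False using not_has_source_insert_In[OF T2(1) _ T2(3)] by blast
qed

end

theorem lemma5p1:
  fixes X :: "'a set" and E :: "'a set set" and k :: nat
  assumes "k \<ge> 3" and "finite X" and "hypergraph k X E" and "set_homogeneous X E"
  shows "two_transitive X (hg_aut X E)"
proof (rule two_transitive_if_swaps[OF assms(3,4,2,1)])
  fix x y assume xy: "x \<in> X" "y \<in> X" "x \<noteq> y"
  show "\<exists>g\<in>hg_aut X E. g x = y \<and> g y = x"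
  proof (cases "card X \<le> k")
    case True
    have "transpose x y \<in> hg_aut X E"
      using hg_aut_if_card_le[OF assms(2,3) True] xy by simp
    then show ?thesis by (intro bexI[of _ "transpose x y"]) simp_all
  next
    case False
    show ?thesis
    proof (rule ccontr)
      assume "\<not> ?thesis"
      then interpret nonswappable_pair X E k x y
        using assms xy False by unfold_locales simp_all
      show False by (rule contradiction)
    qed
  qed
qed

end
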